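(* Let $\mathcal{G}$ and $\mathcal{H}$ be groupoids (not necessarily finite) and let $\phi,\psi\colon\widetilde{S}(\mathcal{G})\to\widetilde{S}(\mathcal{H})$ be morphisms of quasi-schemoids. Then $\phi\simeq\psi$ if and only if there exists a homotopy $\phi\Rightarrow\psi$.
   Context: For a groupoid $\mathcal{H}$, the quasi-schemoid $\widetilde{S}(\mathcal{H})=(\widetilde{\mathcal{H}},S)$ has $ob(\widetilde{\mathcal{H}})=mor(\mathcal{H})$, $\mathrm{Hom}_{\widetilde{\mathcal{H}}}(g,h)=\{(h,g)\}$ if $t(h)=t(g)$ and empty otherwise (composition $(k,h)\circ(h,g)=(k,g)$), and partition $S=\{\mathcal{G}_f\}_{f\in mor(\mathcal{H})}$ with $\mathcal{G}_f=\{(k,l)\mid k^{-1}l=f\}$. A morphism of quasi-schemoids is a functor sending each block of the source partition into some block of the target partition. Product: $(\mathcal{C},S)\times(\mathcal{E},S')=(\mathcal{C}\times\mathcal{E},\{\sigma\times\tau\})$. $[1]$ has objects $0,1$ and one non-identity morphism $0\to1$; $I=([1],\{\{f\}\}_f)$. A homotopy $H\colon F\Rightarrow G$ is a morphism $H\colon(\mathcal{C},S)\times I\to(\mathcal{D},S')$ with $H\circ\varepsilon_0=F$, $H\circ\varepsilon_1=G$ ($\varepsilon_i(a)=(a,i)$, $\varepsilon_i(f)=(f,1_i)$). $F\sim G$ means there is a homotopy $F\Rightarrow G$ or $G\Rightarrow F$; $F\simeq G$ means there is a finite chain $F=F_0\sim F_1\sim\cdots\sim F_n=G$. *)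

theory Defs
  imports Main
begin

record ('o, 'm) cat =
  Ob   :: "'o set"
  Mor  :: "'m set"
  Dom  :: "'m \<Rightarrow> 'o"
  Cod  :: "'m \<Rightarrow> 'o"
  Id   :: "'o \<Rightarrow> 'm"
  Comp :: "'m \<Rightarrow> 'm \<Rightarrow> 'm"   (* Comp C g f = g \<circ> f, defined when Cod f = Dom g *)

definition category :: "('o, 'm) cat \<Rightarrow> bool" where
  "category C \<longleftrightarrow>
     (\<forall>f\<in>Mor C. Dom C f \<in> Ob C \<and> Cod C f \<in> Ob C) \<and>
     (\<forall>a\<in>Ob C. Id C a \<in> Mor C \<and> Dom C (Id C a) = a \<and> Cod C (Id C a) = a) \<and>
     (\<forall>f\<in>Mor C. \<forall>g\<in>Mor C. Cod C f = Dom C g \<longrightarrow>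
        Comp C g f \<in> Mor C \<and> Dom C (Comp C g f) = Dom C f \<and> Cod C (Comp C g f) = Cod C g) \<and>
     (\<forall>f\<in>Mor C. Comp C f (Id C (Dom C f)) = f \<and> Comp C (Id C (Cod C f)) f = f) \<and>
     (\<forall>f\<in>Mor C. \<forall>g\<in>Mor C. \<forall>h\<in>Mor C. Cod C f = Dom C g \<longrightarrow> Cod C g = Dom C h \<longrightarrow>
        Comp C h (Comp C g f) = Comp C (Comp C h g) f)"

definition is_inverse :: "('o, 'm) cat \<Rightarrow> 'm \<Rightarrow> 'm \<Rightarrow> bool" where
  "is_inverse C f g \<longleftrightarrow> g \<in> Mor C \<and> Dom C g = Cod C f \<and> Cod C g = Dom C f \<and>
     Comp C g f = Id C (Dom C f) \<and> Comp C f g = Id C (Cod C f)"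

definition groupoid :: "('o, 'm) cat \<Rightarrow> bool" where
  "groupoid C \<longleftrightarrow> category C \<and> (\<forall>f\<in>Mor C. \<exists>g. is_inverse C f g)"

definition ginv :: "('o, 'm) cat \<Rightarrow> 'm \<Rightarrow> 'm" where
  "ginv C f = (THE g. is_inverse C f g)"

type_synonym ('o, 'm) qschemoid = "('o, 'm) cat \<times> 'm set set"

text \<open>Functors are represented as pairs (object map, morphism map).\<close>
type_synonym ('o1, 'm1, 'o2, 'm2) qfun = "('o1 \<Rightarrow> 'o2) \<times> ('m1 \<Rightarrow> 'm2)"

definition is_functor :: "('o1, 'm1) cat \<Rightarrow> ('o2, 'm2) cat \<Rightarrow> ('o1, 'm1, 'o2, 'm2) qfun \<Rightarrow> bool" where
  "is_functor C D F \<longleftrightarrow>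
     (\<forall>a\<in>Ob C. fst F a \<in> Ob D) \<and>
     (\<forall>f\<in>Mor C. snd F f \<in> Mor D \<and> Dom D (snd F f) = fst F (Dom C f) \<and>
                  Cod D (snd F f) = fst F (Cod C f)) \<and>
     (\<forall>a\<in>Ob C. snd F (Id C a) = Id D (fst F a)) \<and>
     (\<forall>f\<in>Mor C. \<forall>g\<in>Mor C. Cod C f = Dom C g \<longrightarrow>
        snd F (Comp C g f) = Comp D (snd F g) (snd F f))"

definition qs_morphism :: "('o1, 'm1) qschemoid \<Rightarrow> ('o2, 'm2) qschemoid \<Rightarrow> ('o1, 'm1, 'o2, 'm2) qfun \<Rightarrow> bool" where
  "qs_morphism A B F \<longleftrightarrow> is_functor (fst A) (fst B) F \<and>
     (\<forall>\<sigma>\<in>snd A. \<exists>\<tau>\<in>snd B. snd F ` \<sigma> \<subseteq> \<tau>)"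

text \<open>Objects are the morphisms of H; the unique morphism g \<rightarrow> h (when t(g) = t(h)) is the pair (h, g).\<close>
definition tilde_cat :: "('o, 'a) cat \<Rightarrow> ('a, 'a \<times> 'a) cat" where
  "tilde_cat H = \<lparr> Ob = Mor H,
      Mor = {(h, g). h \<in> Mor H \<and> g \<in> Mor H \<and> Cod H h = Cod H g},
      Dom = snd, Cod = fst, Id = (\<lambda>g. (g, g)),
      Comp = (\<lambda>kh hg. (fst kh, snd hg)) \<rparr>"

definition tilde_block :: "('o, 'a) cat \<Rightarrow> 'a \<Rightarrow> ('a \<times> 'a) set" where
  "tilde_block H f = {(k, l) \<in> Mor (tilde_cat H). Comp H (ginv H k) l = f}"

definition tildeS :: "('o, 'a) cat \<Rightarrow> ('a, 'a \<times> 'a) qschemoid" where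
  "tildeS H = (tilde_cat H, {tilde_block H f | f. f \<in> Mor H})"

definition prod_cat :: "('o1, 'm1) cat \<Rightarrow> ('o2, 'm2) cat \<Rightarrow> ('o1 \<times> 'o2, 'm1 \<times> 'm2) cat" where
  "prod_cat C E = \<lparr> Ob = Ob C \<times> Ob E, Mor = Mor C \<times> Mor E,
      Dom = (\<lambda>(f, g). (Dom C f, Dom E g)), Cod = (\<lambda>(f, g). (Cod C f, Cod E g)),
      Id = (\<lambda>(a, b). (Id C a, Id E b)),
      Comp = (\<lambda>(f', g') (f, g). (Comp C f' f, Comp E g' g)) \<rparr>"

definition prod_qs :: "('o1, 'm1) qschemoid \<Rightarrow> ('o2, 'm2) qschemoid \<Rightarrow> ('o1 \<times> 'o2, 'm1 \<times> 'm2) qschemoid" where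
  "prod_qs A B = (prod_cat (fst A) (fst B), {\<sigma> \<times> \<tau> | \<sigma> \<tau>. \<sigma> \<in> snd A \<and> \<tau> \<in> snd B})"

text \<open>[1]: objects False (= 0) and True (= 1); a morphism (a, b) goes from a to b, a \<le> b.\<close>
definition one_cat :: "(bool, bool \<times> bool) cat" where
  "one_cat = \<lparr> Ob = UNIV, Mor = {(a, b). a \<le> b}, Dom = fst, Cod = snd,
      Id = (\<lambda>a. (a, a)), Comp = (\<lambda>bc ab. (fst ab, snd bc)) \<rparr>"

definition I_qs :: "(bool, bool \<times> bool) qschemoid" where
  "I_qs = (one_cat, {{f} | f. f \<in> Mor one_cat})"

definition homotopy ::
  "('o1, 'm1) qschemoid \<Rightarrow> ('o2, 'm2) qschemoid \<Rightarrow> ('o1, 'm1, 'o2, 'm2) qfun \<Rightarrow>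
   ('o1, 'm1, 'o2, 'm2) qfun \<Rightarrow> ('o1 \<times> bool, 'm1 \<times> (bool \<times> bool), 'o2, 'm2) qfun \<Rightarrow> bool" where
  "homotopy A B F G H \<longleftrightarrow> qs_morphism (prod_qs A I_qs) B H \<and>
     (\<forall>a\<in>Ob (fst A). fst H (a, False) = fst F a \<and> fst H (a, True) = fst G a) \<and>
     (\<forall>f\<in>Mor (fst A). snd H (f, Id one_cat False) = snd F f \<and> snd H (f, Id one_cat True) = snd G f)"

definition htp_sim :: "('o1, 'm1) qschemoid \<Rightarrow> ('o2, 'm2) qschemoid \<Rightarrow> ('o1, 'm1, 'o2, 'm2) qfun \<Rightarrow>
   ('o1, 'm1, 'o2, 'm2) qfun \<Rightarrow> bool" where
  "htp_sim A B F G \<longleftrightarrow> (\<exists>H. homotopy A B F G H) \<or> (\<exists>H. homotopy A B G F H)"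

definition htp_equiv :: "('o1, 'm1) qschemoid \<Rightarrow> ('o2, 'm2) qschemoid \<Rightarrow> ('o1, 'm1, 'o2, 'm2) qfun \<Rightarrow>
   ('o1, 'm1, 'o2, 'm2) qfun \<Rightarrow> bool" where
  "htp_equiv A B F G \<longleftrightarrow> (htp_sim A B)\<^sup>*\<^sup>* F G"

end

theory Submission
  imports Defs
begin

text \<open>Between two objects with a common target, \<open>tilde_cat H\<close> has exactly one morphism. So a
  homotopy \<open>tildeS G \<times> I \<rightarrow> tildeS H\<close> is determined by the object maps \<open>X\<close>, \<open>Y\<close> at its two ends:
  it sends \<open>((k, l), 0 \<rightarrow> 1)\<close> to \<open>(Y k, X l)\<close>, and it respects blocks exactly when
  \<open>(Y k)\<inverse> (X l)\<close> depends only on \<open>k\<inverse> l\<close>. This condition on pairs of object maps holds for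
  \<open>X = Y\<close> the object map of a morphism, is symmetric (invert both quotients) and transitive
  (factor \<open>(Y k)\<inverse> (X l)\<close> through \<open>Z l\<close>). Hence it holds along any zigzag of homotopies from
  \<open>\<phi>\<close> to \<open>\<psi>\<close>, and then the unique candidate functor with ends \<open>\<phi>\<close> and \<open>\<psi>\<close> is a homotopy
  \<open>\<phi> \<Rightarrow> \<psi>\<close>.\<close>

text \<open>\<open>gdiv C k l\<close> is \<open>k\<inverse> l\<close>; the blocks of \<open>tildeS C\<close> are its level sets.\<close>
abbreviation gdiv :: "('o, 'm) cat \<Rightarrow> 'm \<Rightarrow> 'm \<Rightarrow> 'm" where
  "gdiv C k l \<equiv> Comp C (ginv C k) l"

context
  fixes C :: "('o, 'm) cat"
  assumes cat: "category C"
begin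

lemma cat_Dom_in_Ob: "f \<in> Mor C \<Longrightarrow> Dom C f \<in> Ob C"
  and cat_Cod_in_Ob: "f \<in> Mor C \<Longrightarrow> Cod C f \<in> Ob C"
  using cat unfolding category_def by blast+

lemma cat_Id_in_Mor: "a \<in> Ob C \<Longrightarrow> Id C a \<in> Mor C"
  and cat_Dom_Id: "a \<in> Ob C \<Longrightarrow> Dom C (Id C a) = a"
  and cat_Cod_Id: "a \<in> Ob C \<Longrightarrow> Cod C (Id C a) = a"
  using cat unfolding category_def by blast+

lemma cat_comp_in_Mor:
    "f \<in> Mor C \<Longrightarrow> g \<in> Mor C \<Longrightarrow> Cod C f = Dom C g \<Longrightarrow> Comp C g f \<in> Mor C"
  and cat_Dom_comp:
    "f \<in> Mor C \<Longrightarrow> g \<in> Mor C \<Longrightarrow> Cod C f = Dom C g \<Longrightarrow> Dom C (Comp C g f) = Dom C f"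
  and cat_Cod_comp:
    "f \<in> Mor C \<Longrightarrow> g \<in> Mor C \<Longrightarrow> Cod C f = Dom C g \<Longrightarrow> Cod C (Comp C g f) = Cod C g"
  using cat unfolding category_def by blast+

lemma cat_comp_Id_Dom: "f \<in> Mor C \<Longrightarrow> Comp C f (Id C (Dom C f)) = f"
  and cat_comp_Id_Cod: "f \<in> Mor C \<Longrightarrow> Comp C (Id C (Cod C f)) f = f"
  using cat unfolding category_def by blast+

lemma cat_comp_assoc:
  "f \<in> Mor C \<Longrightarrow> g \<in> Mor C \<Longrightarrow> h \<in> Mor C \<Longrightarrow> Cod C f = Dom C g \<Longrightarrow> Cod C g = Dom C h \<Longrightarrow>
    Comp C h (Comp C g f) = Comp C (Comp C h g) f"
  using cat unfolding category_def by blast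

lemma is_inverse_unique:
  assumes f: "f \<in> Mor C" and g: "is_inverse C f g" and g': "is_inverse C f g'"
  shows "g = g'"
proof -
  have "g = Comp C g (Comp C f g')"
    using g g' cat_comp_Id_Dom[of g] by (simp add: is_inverse_def)
  also have "\<dots> = Comp C (Comp C g f) g'"
    using g g' f by (intro cat_comp_assoc) (auto simp: is_inverse_def)
  also have "\<dots> = g'"
    using g g' cat_comp_Id_Cod[of g'] by (simp add: is_inverse_def)
  finally show ?thesis .
qed

end

context
  fixes C :: "('o, 'm) cat"
  assumes gr: "groupoid C"
begin

lemma groupoid_category: "category C"
  using gr unfolding groupoid_def by simp

lemma ginv_is_inverse:
  assumes f: "f \<in> Mor C"
  shows "is_inverse C f (ginv C f)"
proof -
  obtain g where "is_inverse C f g"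
    using gr f unfolding groupoid_def by blast
  then have "\<exists>!g. is_inverse C f g"
    using is_inverse_unique[OF groupoid_category f] by blast
  then show ?thesis
    unfolding ginv_def by (rule theI')
qed

lemma ginv_eqI: "f \<in> Mor C \<Longrightarrow> is_inverse C f g \<Longrightarrow> ginv C f = g"
  using is_inverse_unique[OF groupoid_category] ginv_is_inverse by blast

lemma ginvD:
  assumes "f \<in> Mor C"
  shows "ginv C f \<in> Mor C" "Dom C (ginv C f) = Cod C f" "Cod C (ginv C f) = Dom C f"
    "Comp C (ginv C f) f = Id C (Dom C f)" "Comp C f (ginv C f) = Id C (Cod C f)"
  using ginv_is_inverse[OF assms] unfolding is_inverse_def by auto

lemma ginv_Id:
  assumes a: "a \<in> Ob C"
  shows "ginv C (Id C a) = Id C a"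
proof -
  note cat = groupoid_category
  have "Comp C (Id C a) (Id C a) = Id C a"
    using cat_comp_Id_Dom[OF cat cat_Id_in_Mor[OF cat a]] cat_Dom_Id[OF cat a] by simp
  then show ?thesis
    using a by (intro ginv_eqI)
      (simp_all add: is_inverse_def cat_Id_in_Mor[OF cat] cat_Dom_Id[OF cat] cat_Cod_Id[OF cat])
qed

lemma gdiv_in_Mor: "k \<in> Mor C \<Longrightarrow> l \<in> Mor C \<Longrightarrow> Cod C k = Cod C l \<Longrightarrow> gdiv C k l \<in> Mor C"
  and Dom_gdiv: "k \<in> Mor C \<Longrightarrow> l \<in> Mor C \<Longrightarrow> Cod C k = Cod C l \<Longrightarrow> Dom C (gdiv C k l) = Dom C l"
  and Cod_gdiv: "k \<in> Mor C \<Longrightarrow> l \<in> Mor C \<Longrightarrow> Cod C k = Cod C l \<Longrightarrow> Cod C (gdiv C k l) = Dom C k"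
  by (simp_all add: ginvD cat_comp_in_Mor[OF groupoid_category] cat_Dom_comp[OF groupoid_category]
      cat_Cod_comp[OF groupoid_category])

lemma gdiv_self: "l \<in> Mor C \<Longrightarrow> gdiv C l l = Id C (Dom C l)"
  by (rule ginvD(4))

lemma gdiv_Id_Cod: "f \<in> Mor C \<Longrightarrow> gdiv C (Id C (Cod C f)) f = f"
  by (simp add: ginv_Id cat_Cod_in_Ob[OF groupoid_category] cat_comp_Id_Cod[OF groupoid_category])

lemma gdiv_trans:
  assumes a: "a \<in> Mor C" and b: "b \<in> Mor C" and c: "c \<in> Mor C"
    and ab: "Cod C a = Cod C b" and bc: "Cod C b = Cod C c"
  shows "Comp C (gdiv C a b) (gdiv C b c) = gdiv C a c"
proof -
  note cat = groupoid_category and ia = ginvD[OF a] and ib = ginvD[OF b]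
  have "Comp C (gdiv C a b) (gdiv C b c) = Comp C (ginv C a) (Comp C b (gdiv C b c))"
    using cat_comp_assoc[OF cat gdiv_in_Mor[OF b c bc] b ia(1)] Cod_gdiv[OF b c bc] ia(2) ab
    by simp
  also have "Comp C b (gdiv C b c) = Comp C (Comp C b (ginv C b)) c"
    using b c bc ib by (simp add: cat_comp_assoc[OF cat])
  also have "\<dots> = c"
    using c bc ib(5) by (simp add: cat_comp_Id_Cod[OF cat])
  finally show ?thesis .
qed

lemma ginv_gdiv:
  assumes a: "a \<in> Mor C" and b: "b \<in> Mor C" and ab: "Cod C a = Cod C b"
  shows "ginv C (gdiv C a b) = gdiv C b a"
  using assms
  by (intro ginv_eqI) (simp_all add: is_inverse_def gdiv_in_Mor Dom_gdiv Cod_gdiv gdiv_trans gdiv_self)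

end

lemma category_prod_cat:
  assumes "category C" "category E"
  shows "category (prod_cat C E)"
  using assms unfolding category_def prod_cat_def by auto

lemma category_one_cat: "category one_cat"
  unfolding category_def one_cat_def by auto

lemma category_tilde_cat: "category (tilde_cat H)"
  unfolding category_def tilde_cat_def by auto

lemma Ob_tilde_cat [simp]: "Ob (tilde_cat H) = Mor H"
  by (simp add: tilde_cat_def)

lemma Mor_tilde_cat_iff [simp]:
  "(k, l) \<in> Mor (tilde_cat H) \<longleftrightarrow> k \<in> Mor H \<and> l \<in> Mor H \<and> Cod H k = Cod H l"
  by (simp add: tilde_cat_def)

lemma fst_tildeS [simp]: "fst (tildeS H) = tilde_cat H"
  and snd_tildeS: "snd (tildeS H) = {tilde_block H f | f. f \<in> Mor H}"
  by (simp_all add: tildeS_def)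

lemma functor_into_tilde_cat:
  assumes "is_functor C (tilde_cat H) F" "f \<in> Mor C"
  shows "snd F f = (fst F (Cod C f), fst F (Dom C f))"
  using assms unfolding is_functor_def by (auto simp: tilde_cat_def prod_eq_iff)

lemma functor_between_tilde_cats:
  "is_functor (tilde_cat G) (tilde_cat H) F \<Longrightarrow> (k, l) \<in> Mor (tilde_cat G) \<Longrightarrow>
    snd F (k, l) = (fst F k, fst F l)"
  by (drule (1) functor_into_tilde_cat) (simp add: tilde_cat_def)

definition tilde_functor :: "('o, 'm) cat \<Rightarrow> ('o \<Rightarrow> 'b) \<Rightarrow> ('o, 'm, 'b, 'b \<times> 'b) qfun" where
  "tilde_functor C X = (X, \<lambda>f. (X (Cod C f), X (Dom C f)))"

lemma is_functor_tilde_functor: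
  assumes cat: "category C" and ob: "\<And>a. a \<in> Ob C \<Longrightarrow> X a \<in> Mor H"
    and cod: "\<And>f. f \<in> Mor C \<Longrightarrow> Cod H (X (Cod C f)) = Cod H (X (Dom C f))"
  shows "is_functor C (tilde_cat H) (tilde_functor C X)"
  unfolding is_functor_def tilde_functor_def
  using cat_Cod_in_Ob[OF cat] ob cod
  by (auto simp: tilde_cat_def cat_Dom_Id[OF cat] cat_Cod_Id[OF cat] cat_Dom_comp[OF cat]
      cat_Cod_comp[OF cat] dest: cat_Dom_in_Ob[OF cat])

lemma tilde_block_gdiv: "(k, l) \<in> Mor (tilde_cat G) \<Longrightarrow> (k, l) \<in> tilde_block G (gdiv G k l)"
  by (simp add: tilde_block_def)

lemma tildeS_block_gdiv_eq:
  "\<tau> \<in> snd (tildeS H) \<Longrightarrow> (k, l) \<in> \<tau> \<Longrightarrow> (k', l') \<in> \<tau> \<Longrightarrow> gdiv H k l = gdiv H k' l'"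
  by (auto simp: snd_tildeS tilde_block_def)

text \<open>\<open>X\<close> and \<open>Y\<close> play the role of the object maps at time \<open>0\<close> and \<open>1\<close> of a homotopy, which must
  send \<open>((k, l), 0 \<rightarrow> 1)\<close> to \<open>(Y k, X l)\<close>.\<close>
definition block_compatible ::
  "('o1, 'a) cat \<Rightarrow> ('o2, 'b) cat \<Rightarrow> ('a \<Rightarrow> 'b) \<Rightarrow> ('a \<Rightarrow> 'b) \<Rightarrow> bool" where
  "block_compatible G H X Y \<longleftrightarrow>
     (\<forall>k l. (k, l) \<in> Mor (tilde_cat G) \<longrightarrow> (Y k, X l) \<in> Mor (tilde_cat H)) \<and>
     (\<forall>k l k' l'. (k, l) \<in> Mor (tilde_cat G) \<longrightarrow> (k', l') \<in> Mor (tilde_cat G) \<longrightarrow>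
        gdiv G k l = gdiv G k' l' \<longrightarrow> gdiv H (Y k) (X l) = gdiv H (Y k') (X l'))"

lemma block_compatible_Mor:
  "block_compatible G H X Y \<Longrightarrow> (k, l) \<in> Mor (tilde_cat G) \<Longrightarrow> (Y k, X l) \<in> Mor (tilde_cat H)"
  unfolding block_compatible_def by blast

lemma block_compatible_gdiv:
  "block_compatible G H X Y \<Longrightarrow> (k, l) \<in> Mor (tilde_cat G) \<Longrightarrow> (k', l') \<in> Mor (tilde_cat G) \<Longrightarrow>
    gdiv G k l = gdiv G k' l' \<Longrightarrow> gdiv H (Y k) (X l) = gdiv H (Y k') (X l')"
  unfolding block_compatible_def by blast

lemma block_compatible_iff_blocks:
  assumes gG: "groupoid G" and gH: "groupoid H"
  shows "block_compatible G H X Y \<longleftrightarrow>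
    (\<forall>k l. (k, l) \<in> Mor (tilde_cat G) \<longrightarrow> (Y k, X l) \<in> Mor (tilde_cat H)) \<and>
    (\<forall>f\<in>Mor G. \<exists>\<tau>\<in>snd (tildeS H). \<forall>(k, l)\<in>tilde_block G f. (Y k, X l) \<in> \<tau>)"
proof (intro iffI conjI ballI; (elim conjE)?)
  assume R: "block_compatible G H X Y"
  then show "\<forall>k l. (k, l) \<in> Mor (tilde_cat G) \<longrightarrow> (Y k, X l) \<in> Mor (tilde_cat H)"
    by (blast intro: block_compatible_Mor)
  fix f assume f: "f \<in> Mor G"
  define i where "i = Id G (Cod G f)"
  have i: "(i, f) \<in> Mor (tilde_cat G)" "gdiv G i f = f"
    using f groupoid_category[OF gG] gdiv_Id_Cod[OF gG f]
    by (simp_all add: i_def cat_Id_in_Mor cat_Cod_Id cat_Cod_in_Ob)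
  have "\<forall>(k, l)\<in>tilde_block G f. (Y k, X l) \<in> tilde_block H (gdiv H (Y i) (X f))"
  proof (clarify)
    fix k l assume "(k, l) \<in> tilde_block G f"
    then have kl: "(k, l) \<in> Mor (tilde_cat G)" and "gdiv G k l = gdiv G i f"
      using i(2) by (simp_all add: tilde_block_def)
    from this(2) have "gdiv H (Y k) (X l) = gdiv H (Y i) (X f)"
      by (rule block_compatible_gdiv[OF R kl i(1)])
    with block_compatible_Mor[OF R kl] show "(Y k, X l) \<in> tilde_block H (gdiv H (Y i) (X f))"
      by (simp add: tilde_block_def del: Mor_tilde_cat_iff)
  qed
  moreover have "tilde_block H (gdiv H (Y i) (X f)) \<in> snd (tildeS H)"
    using block_compatible_Mor[OF R i(1)] by (auto simp: snd_tildeS gdiv_in_Mor[OF gH])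
  ultimately show "\<exists>\<tau>\<in>snd (tildeS H). \<forall>(k, l)\<in>tilde_block G f. (Y k, X l) \<in> \<tau>"
    by blast
next
  assume mor: "\<forall>k l. (k, l) \<in> Mor (tilde_cat G) \<longrightarrow> (Y k, X l) \<in> Mor (tilde_cat H)"
    and blk: "\<forall>f\<in>Mor G. \<exists>\<tau>\<in>snd (tildeS H). \<forall>(k, l)\<in>tilde_block G f. (Y k, X l) \<in> \<tau>"
  show "block_compatible G H X Y"
    unfolding block_compatible_def
  proof (intro conjI allI impI mor[rule_format])
    fix k l k' l'
    assume kl: "(k, l) \<in> Mor (tilde_cat G)" and kl': "(k', l') \<in> Mor (tilde_cat G)"
      and eq: "gdiv G k l = gdiv G k' l'"
    obtain \<tau> where "\<tau> \<in> snd (tildeS H)" "\<forall>(k, l)\<in>tilde_block G (gdiv G k l). (Y k, X l) \<in> \<tau>"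
      using blk kl gdiv_in_Mor[OF gG] by force
    then show "gdiv H (Y k) (X l) = gdiv H (Y k') (X l')"
      using tilde_block_gdiv[OF kl] tilde_block_gdiv[OF kl'] eq by (auto intro: tildeS_block_gdiv_eq)
  qed
qed

lemma qs_morphism_block_compatible:
  assumes gG: "groupoid G" and gH: "groupoid H" and F: "qs_morphism (tildeS G) (tildeS H) F"
  shows "block_compatible G H (fst F) (fst F)"
proof -
  have Ff: "is_functor (tilde_cat G) (tilde_cat H) F"
    using F by (simp add: qs_morphism_def)
  note snd_F = functor_between_tilde_cats[OF Ff]
  have "(fst F k, fst F l) \<in> Mor (tilde_cat H)" if kl: "(k, l) \<in> Mor (tilde_cat G)" for k l
  proof -
    have "snd F (k, l) \<in> Mor (tilde_cat H)"
      using Ff kl unfolding is_functor_def by blast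
    then show ?thesis using snd_F[OF kl] by simp
  qed
  moreover have "\<exists>\<tau>\<in>snd (tildeS H). \<forall>(k, l)\<in>tilde_block G f. (fst F k, fst F l) \<in> \<tau>"
    if "f \<in> Mor G" for f
  proof -
    have "tilde_block G f \<in> snd (tildeS G)"
      using that by (auto simp: snd_tildeS)
    then obtain \<tau> where \<tau>: "\<tau> \<in> snd (tildeS H)" "snd F ` tilde_block G f \<subseteq> \<tau>"
      using F unfolding qs_morphism_def by blast
    have "\<forall>(k, l)\<in>tilde_block G f. (fst F k, fst F l) \<in> \<tau>"
    proof clarify
      fix k l assume kl: "(k, l) \<in> tilde_block G f"
      then have "(k, l) \<in> Mor (tilde_cat G)"
        unfolding tilde_block_def by blast
      then show "(fst F k, fst F l) \<in> \<tau>"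
        using \<tau>(2) kl snd_F by (metis image_eqI subsetD)
    qed
    with \<tau>(1) show ?thesis by blast
  qed
  ultimately show ?thesis
    by (simp add: block_compatible_iff_blocks[OF gG gH] del: Mor_tilde_cat_iff)
qed

lemma block_compatible_sym:
  assumes gG: "groupoid G" and gH: "groupoid H" and R: "block_compatible G H X Y"
  shows "block_compatible G H Y X"
  unfolding block_compatible_def
proof (intro conjI allI impI)
  fix k l assume "(k, l) \<in> Mor (tilde_cat G)"
  then have "(l, k) \<in> Mor (tilde_cat G)" by auto
  from block_compatible_Mor[OF R this] show "(X k, Y l) \<in> Mor (tilde_cat H)" by auto
next
  fix k l k' l'
  assume kl: "(k, l) \<in> Mor (tilde_cat G)" and kl': "(k', l') \<in> Mor (tilde_cat G)"
    and eq: "gdiv G k l = gdiv G k' l'"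
  have lk: "(l, k) \<in> Mor (tilde_cat G)" "(l', k') \<in> Mor (tilde_cat G)"
    using kl kl' by auto
  have "gdiv G l k = gdiv G l' k'"
    using arg_cong[OF eq, of "ginv G"] kl kl' ginv_gdiv[OF gG, of k l] ginv_gdiv[OF gG, of k' l']
    by simp
  then have eqH: "gdiv H (Y l) (X k) = gdiv H (Y l') (X k')"
    by (rule block_compatible_gdiv[OF R lk])
  have m: "(Y l, X k) \<in> Mor (tilde_cat H)" "(Y l', X k') \<in> Mor (tilde_cat H)"
    using block_compatible_Mor[OF R] lk by blast+
  have "gdiv H (X k) (Y l) = ginv H (gdiv H (Y l) (X k))"
    using m(1) by (simp add: ginv_gdiv[OF gH])
  also have "\<dots> = gdiv H (X k') (Y l')"
    using m(2) by (simp add: eqH ginv_gdiv[OF gH])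
  finally show "gdiv H (X k) (Y l) = gdiv H (X k') (Y l')" .
qed

lemma block_compatible_trans:
  assumes gG: "groupoid G" and gH: "groupoid H"
    and XZ: "block_compatible G H X Z" and ZY: "block_compatible G H Z Y"
  shows "block_compatible G H X Y"
  unfolding block_compatible_def
proof (intro conjI allI impI)
  fix k l assume "(k, l) \<in> Mor (tilde_cat G)"
  then show "(Y k, X l) \<in> Mor (tilde_cat H)"
    using block_compatible_Mor[OF ZY, of k l] block_compatible_Mor[OF XZ, of l l] by auto
next
  fix k l k' l'
  assume kl: "(k, l) \<in> Mor (tilde_cat G)" and kl': "(k', l') \<in> Mor (tilde_cat G)"
    and eq: "gdiv G k l = gdiv G k' l'"
  have ll: "(l, l) \<in> Mor (tilde_cat G)" "(l', l') \<in> Mor (tilde_cat G)"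
    using kl kl' by auto
  \<comment> \<open>Both sides factor through Z l resp. Z l', and l\<inverse> l = l'\<inverse> l' since l and l' have the same
    domain, namely that of k\<inverse> l = k'\<inverse> l'.\<close>
  have "gdiv G l l = gdiv G l' l'"
    using arg_cong[OF eq, of "Dom G"] kl kl' by (simp add: gdiv_self[OF gG] Dom_gdiv[OF gG])
  then have ZX: "gdiv H (Z l) (X l) = gdiv H (Z l') (X l')"
    by (rule block_compatible_gdiv[OF XZ ll])
  have YZ: "gdiv H (Y k) (Z l) = gdiv H (Y k') (Z l')"
    using eq by (rule block_compatible_gdiv[OF ZY kl kl'])
  have m: "(Y k, Z l) \<in> Mor (tilde_cat H)" "(Z l, X l) \<in> Mor (tilde_cat H)"
    "(Y k', Z l') \<in> Mor (tilde_cat H)" "(Z l', X l') \<in> Mor (tilde_cat H)"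
    using block_compatible_Mor[OF ZY] block_compatible_Mor[OF XZ] kl kl' ll by blast+
  have "gdiv H (Y k) (X l) = Comp H (gdiv H (Y k) (Z l)) (gdiv H (Z l) (X l))"
    using m(1,2) by (simp add: gdiv_trans[OF gH])
  also have "\<dots> = Comp H (gdiv H (Y k') (Z l')) (gdiv H (Z l') (X l'))"
    by (simp only: YZ ZX)
  also have "\<dots> = gdiv H (Y k') (X l')"
    using m(3,4) by (simp add: gdiv_trans[OF gH])
  finally show "gdiv H (Y k) (X l) = gdiv H (Y k') (X l')" .
qed

lemma homotopy_block_compatible:
  assumes gG: "groupoid G" and gH: "groupoid H" and K: "homotopy (tildeS G) (tildeS H) F1 F2 K"
  shows "block_compatible G H (fst F1) (fst F2)"
proof -
  let ?P = "prod_cat (tilde_cat G) one_cat"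
  have Kf: "is_functor ?P (tilde_cat H) K"
    and Kb: "\<forall>\<sigma>\<in>snd (prod_qs (tildeS G) I_qs). \<exists>\<tau>\<in>snd (tildeS H). snd K ` \<sigma> \<subseteq> \<tau>"
    and ends: "\<forall>a\<in>Mor G. fst K (a, False) = fst F1 a \<and> fst K (a, True) = fst F2 a"
    using K unfolding homotopy_def qs_morphism_def by (auto simp: prod_qs_def I_qs_def)
  have K_step: "snd K ((k, l), (False, True)) = (fst F2 k, fst F1 l)"
    and K_step_Mor: "snd K ((k, l), (False, True)) \<in> Mor (tilde_cat H)"
    if kl: "(k, l) \<in> Mor (tilde_cat G)" for k l
  proof -
    have m: "((k, l), (False, True)) \<in> Mor ?P"
      using kl by (simp add: prod_cat_def one_cat_def del: Mor_tilde_cat_iff)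
    then show "snd K ((k, l), (False, True)) \<in> Mor (tilde_cat H)"
      using Kf unfolding is_functor_def by blast
    show "snd K ((k, l), (False, True)) = (fst F2 k, fst F1 l)"
      using functor_into_tilde_cat[OF Kf m] kl ends
      by (simp add: prod_cat_def tilde_cat_def one_cat_def)
  qed
  have "\<exists>\<tau>\<in>snd (tildeS H). \<forall>(k, l)\<in>tilde_block G f. (fst F2 k, fst F1 l) \<in> \<tau>"
    if f: "f \<in> Mor G" for f
  proof -
    have "tilde_block G f \<in> snd (tildeS G)"
      using f by (auto simp: snd_tildeS)
    moreover have "{(False, True)} \<in> snd I_qs"
      by (auto simp: I_qs_def one_cat_def)
    ultimately have "tilde_block G f \<times> {(False, True)} \<in> snd (prod_qs (tildeS G) I_qs)"
      unfolding prod_qs_def by auto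
    then obtain \<tau> where \<tau>: "\<tau> \<in> snd (tildeS H)"
      "snd K ` (tilde_block G f \<times> {(False, True)}) \<subseteq> \<tau>"
      using Kb by blast
    have "\<forall>(k, l)\<in>tilde_block G f. (fst F2 k, fst F1 l) \<in> \<tau>"
    proof clarify
      fix k l assume kl: "(k, l) \<in> tilde_block G f"
      then have "snd K ((k, l), (False, True)) \<in> \<tau>"
        using \<tau>(2) by blast
      moreover have "(k, l) \<in> Mor (tilde_cat G)"
        using kl unfolding tilde_block_def by blast
      ultimately show "(fst F2 k, fst F1 l) \<in> \<tau>"
        by (simp add: K_step del: Mor_tilde_cat_iff)
    qed
    with \<tau>(1) show ?thesis by blast
  qed
  moreover have "(fst F2 k, fst F1 l) \<in> Mor (tilde_cat H)" if "(k, l) \<in> Mor (tilde_cat G)" for k l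
    using K_step[OF that] K_step_Mor[OF that] by simp
  ultimately show ?thesis
    by (simp add: block_compatible_iff_blocks[OF gG gH] del: Mor_tilde_cat_iff)
qed

definition tilde_homotopy ::
  "('o, 'a) cat \<Rightarrow> ('a, 'a \<times> 'a, 'b, 'b \<times> 'b) qfun \<Rightarrow> ('a, 'a \<times> 'a, 'b, 'b \<times> 'b) qfun \<Rightarrow>
   ('a \<times> bool, ('a \<times> 'a) \<times> (bool \<times> bool), 'b, 'b \<times> 'b) qfun" where
  "tilde_homotopy G F1 F2 =
     tilde_functor (prod_cat (tilde_cat G) one_cat) (\<lambda>(g, t). (if t then fst F2 else fst F1) g)"

lemma block_compatible_homotopy:
  assumes gG: "groupoid G" and gH: "groupoid H"
    and F1: "qs_morphism (tildeS G) (tildeS H) F1" and F2: "qs_morphism (tildeS G) (tildeS H) F2"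
    and R: "block_compatible G H (fst F1) (fst F2)"
  shows "homotopy (tildeS G) (tildeS H) F1 F2 (tilde_homotopy G F1 F2)"
proof -
  let ?P = "prod_cat (tilde_cat G) one_cat" and ?K = "tilde_homotopy G F1 F2"
  define X where "X t = (if t then fst F2 else fst F1)" for t
  have K_apply: "snd ?K ((k, l), (s, t)) = (X t k, X s l)" for k l s t
    by (simp add: tilde_homotopy_def tilde_functor_def prod_cat_def tilde_cat_def one_cat_def X_def)
  have RX: "block_compatible G H (X s) (X t)" if "s \<le> t" for s t
    using that R qs_morphism_block_compatible[OF gG gH F1] qs_morphism_block_compatible[OF gG gH F2]
    by (cases s; cases t) (simp_all add: X_def)
  have K_eq: "?K = tilde_functor ?P (\<lambda>(g, t). X t g)"
    by (simp add: tilde_homotopy_def X_def)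
  have "is_functor ?P (tilde_cat H) ?K"
    unfolding K_eq
  proof (rule is_functor_tilde_functor)
    show "category ?P"
      by (intro category_prod_cat category_tilde_cat category_one_cat)
  next
    fix a assume "a \<in> Ob ?P"
    then obtain g t where "a = (g, t)" "(g, g) \<in> Mor (tilde_cat G)"
      by (auto simp: prod_cat_def)
    with block_compatible_Mor[OF RX[OF order_refl, of t]]
    show "(\<lambda>(g, t). X t g) a \<in> Mor H"
      by auto
  next
    fix f assume "f \<in> Mor ?P"
    then obtain k l s t where "f = ((k, l), (s, t))" "(k, l) \<in> Mor (tilde_cat G)" "s \<le> t"
      by (auto simp: prod_cat_def one_cat_def simp del: Mor_tilde_cat_iff)
    with block_compatible_Mor[OF RX]
    show "Cod H ((\<lambda>(g, t). X t g) (Cod ?P f)) = Cod H ((\<lambda>(g, t). X t g) (Dom ?P f))"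
      by (auto simp: prod_cat_def tilde_cat_def one_cat_def)
  qed
  moreover have "\<exists>\<tau>\<in>snd (tildeS H). snd ?K ` \<sigma> \<subseteq> \<tau>"
    if \<sigma>_block: "\<sigma> \<in> snd (prod_qs (tildeS G) I_qs)" for \<sigma>
  proof -
    obtain f st where \<sigma>: "\<sigma> = tilde_block G f \<times> {st}" "f \<in> Mor G" "st \<in> Mor one_cat"
      using \<sigma>_block by (auto simp: prod_qs_def snd_tildeS I_qs_def)
    obtain s t where st: "st = (s, t)" "s \<le> t"
      using \<sigma>(3) by (auto simp: one_cat_def)
    then obtain \<tau> where \<tau>: "\<tau> \<in> snd (tildeS H)" "\<forall>(k, l)\<in>tilde_block G f. (X t k, X s l) \<in> \<tau>"
      using RX[OF st(2)] \<sigma>(2)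
      by (auto simp: block_compatible_iff_blocks[OF gG gH] simp del: Mor_tilde_cat_iff)
    have "snd ?K ` \<sigma> \<subseteq> \<tau>"
      using \<tau>(2) \<sigma>(1) st(1) K_apply by auto
    with \<tau>(1) show ?thesis by blast
  qed
  moreover have "snd ?K (f, Id one_cat False) = snd F1 f \<and> snd ?K (f, Id one_cat True) = snd F2 f"
    if "f \<in> Mor (tilde_cat G)" for f
    using that K_apply F1 F2 functor_between_tilde_cats[of G H F1] functor_between_tilde_cats[of G H F2]
    by (cases f) (simp add: one_cat_def X_def qs_morphism_def del: Mor_tilde_cat_iff)
  ultimately show ?thesis
    unfolding homotopy_def qs_morphism_def
    by (simp add: prod_qs_def I_qs_def tilde_homotopy_def tilde_functor_def)
qed

theorem proposition4p10:
  fixes G :: "('o1, 'a) cat" and H :: "('o2, 'b) cat"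
    and \<phi> \<psi> :: "('a, 'a \<times> 'a, 'b, 'b \<times> 'b) qfun"
  assumes "groupoid G" and "groupoid H"
    and "qs_morphism (tildeS G) (tildeS H) \<phi>"
    and "qs_morphism (tildeS G) (tildeS H) \<psi>"
  shows "htp_equiv (tildeS G) (tildeS H) \<phi> \<psi> \<longleftrightarrow>
         (\<exists>K. homotopy (tildeS G) (tildeS H) \<phi> \<psi> K)"
proof
  assume "htp_equiv (tildeS G) (tildeS H) \<phi> \<psi>"
  then have "(htp_sim (tildeS G) (tildeS H))\<^sup>*\<^sup>* \<phi> \<psi>"
    by (simp add: htp_equiv_def)
  then have "block_compatible G H (fst \<phi>) (fst \<psi>)"
  proof (induction rule: rtranclp_induct)
    case base
    show ?case using qs_morphism_block_compatible[OF assms(1,2,3)] .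
  next
    case (step F F')
    then have "block_compatible G H (fst F) (fst F')"
      unfolding htp_sim_def
      using homotopy_block_compatible[OF assms(1,2)] block_compatible_sym[OF assms(1,2)] by blast
    with step.IH show ?case
      by (rule block_compatible_trans[OF assms(1,2)])
  qed
  then show "\<exists>K. homotopy (tildeS G) (tildeS H) \<phi> \<psi> K"
    using block_compatible_homotopy[OF assms] by blast
next
  assume "\<exists>K. homotopy (tildeS G) (tildeS H) \<phi> \<psi> K"
  then show "htp_equiv (tildeS G) (tildeS H) \<phi> \<psi>"
    by (simp add: htp_equiv_def htp_sim_def r_into_rtranclp)
qed

end
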